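(* Let $X,Y,Z_1,\dots,Z_{k+1}$ ($k\ge1$) be random variables with finite state spaces. Then $\widetilde{UI}(X:Y\setminus(Z_1,\dots,Z_k))\ge\widetilde{UI}(X:Y\setminus(Z_1,\dots,Z_{k+1}))$.
   Context: For random variables $X,Y,Z$ with finite state spaces $\mathcal X,\mathcal Y,\mathcal Z$ and joint distribution $P$, let $\Delta$ be the set of all distributions on $\mathcal X\times\mathcal Y\times\mathcal Z$, $\Delta_P=\{Q\in\Delta: Q(X=x,Y=y)=P(X=x,Y=y)\text{ and }Q(X=x,Z=z)=P(X=x,Z=z)\ \forall x,y,z\}$, and $\widetilde{UI}(X:Y\setminus Z)=\min_{Q\in\Delta_P}MI_Q(X:Y|Z)$, where $MI_Q$ is conditional mutual information computed w.r.t. $Q$. Here $\widetilde{UI}(X:Y\setminus(Z_1,\dots,Z_m))$ means this definition applied with $Z$ the tuple $(Z_1,\dots,Z_m)$ (state space the product of the state spaces of the $Z_i$) and $P$ the joint distribution of $(X,Y,Z_1,\dots,Z_m)$; so $\Delta_P$ consists of distributions of $(X,Y,Z_1,\dots,Z_m)$ with the same $(X,Y)$-marginal and the same $(X,Z_1,\dots,Z_m)$-marginal as $P$. *)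

theory Defs
  imports Complex_Main
begin

text \<open>Finite-support distributions of a triple (X,Y,Z), where X ranges over the finite
  state space A, Y over B and Z over C.\<close>

definition distr_on :: "'x set \<Rightarrow> 'y set \<Rightarrow> 'c set \<Rightarrow> ('x \<times> 'y \<times> 'c \<Rightarrow> real) set" where
  "distr_on A B C = {Q. (\<forall>t. 0 \<le> Q t) \<and> (\<forall>t. t \<notin> A \<times> B \<times> C \<longrightarrow> Q t = 0)
                        \<and> (\<Sum>t\<in>A \<times> B \<times> C. Q t) = 1}"

definition cond_mi :: "'x set \<Rightarrow> 'y set \<Rightarrow> 'c set \<Rightarrow> ('x \<times> 'y \<times> 'c \<Rightarrow> real) \<Rightarrow> real" where
  "cond_mi A B C Q =
     (\<Sum>x\<in>A. \<Sum>y\<in>B. \<Sum>c\<in>C.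
        (let q = Q (x, y, c);
             qc = (\<Sum>x'\<in>A. \<Sum>y'\<in>B. Q (x', y', c));
             qxc = (\<Sum>y'\<in>B. Q (x, y', c));
             qyc = (\<Sum>x'\<in>A. Q (x', y, c))
         in if q = 0 then 0 else q * ln (q * qc / (qxc * qyc))))"

definition Delta_P :: "'x set \<Rightarrow> 'y set \<Rightarrow> 'c set \<Rightarrow> ('x \<times> 'y \<times> 'c \<Rightarrow> real) \<Rightarrow> ('x \<times> 'y \<times> 'c \<Rightarrow> real) set" where
  "Delta_P A B C P = {Q \<in> distr_on A B C.
      (\<forall>x y. (\<Sum>c\<in>C. Q (x, y, c)) = (\<Sum>c\<in>C. P (x, y, c))) \<and>
      (\<forall>x c. (\<Sum>y\<in>B. Q (x, y, c)) = (\<Sum>y\<in>B. P (x, y, c)))}"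

text \<open>UI~(X:Y \ Z) = min over Delta_P of MI_Q(X:Y|Z) (the minimum is attained; we write Inf).\<close>

definition UI_tilde :: "'x set \<Rightarrow> 'y set \<Rightarrow> 'c set \<Rightarrow> ('x \<times> 'y \<times> 'c \<Rightarrow> real) \<Rightarrow> real" where
  "UI_tilde A B C P = Inf (cond_mi A B C ` Delta_P A B C P)"

text \<open>State space of the tuple (Z_1,...,Z_n): lists of length n whose (i+1)-st entry
  lies in S i, the state space of Z_(i+1).\<close>

definition tuples :: "(nat \<Rightarrow> 'z set) \<Rightarrow> nat \<Rightarrow> 'z list set" where
  "tuples S n = {zs. length zs = n \<and> (\<forall>i<n. zs ! i \<in> S i)}"

end

theory Submission
  imports Defs
begin

text \<open>Let \<open>W\<close> be the new variable \<open>Z\<^sub>k\<^sub>+\<^sub>1\<close>. Any \<open>Q\<close> admissible for the coarser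
  conditioning \<open>Z\<close> extends by the channel \<open>P(w | x, z)\<close> to
  \<open>Q'(x, y, z, w) = Q(x, y, z) P(w | x, z)\<close>, which is admissible for the finer conditioning
  \<open>(Z, W)\<close>. Under \<open>Q'\<close>, \<open>W\<close> and \<open>Y\<close> are conditionally independent given \<open>(X, Z)\<close>, so
  \<open>I(X;Y|Z,W) \<le> I(XW;Y|Z) = I(X;Y|Z)\<close>. Here this is verified directly: the logarithm in
  \<open>I(X;Y|Z,W)\<close> splits into the one of \<open>I(X;Y|Z)\<close> plus a correction that \<open>ln s \<le> s - 1\<close>
  bounds by a quantity of total mass at most zero.\<close>

lemma sum_cartesian_product3:
  "(\<Sum>t\<in>A \<times> B \<times> C. f t) = (\<Sum>x\<in>A. \<Sum>y\<in>B. \<Sum>z\<in>C. f (x, y, z))"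
  by (simp add: sum.cartesian_product split_def)

lemma sum_rotate3:
  "(\<Sum>x\<in>A. \<Sum>y\<in>B. \<Sum>z\<in>C. f x y z) = (\<Sum>z\<in>C. \<Sum>x\<in>A. \<Sum>y\<in>B. f x y z)"
proof -
  have "(\<Sum>x\<in>A. \<Sum>y\<in>B. \<Sum>z\<in>C. f x y z) = (\<Sum>x\<in>A. \<Sum>z\<in>C. \<Sum>y\<in>B. f x y z)"
    by (rule sum.cong[OF refl sum.swap])
  also have "\<dots> = (\<Sum>z\<in>C. \<Sum>x\<in>A. \<Sum>y\<in>B. f x y z)"
    by (rule sum.swap)
  finally show ?thesis .
qed

lemma sum_image_case_prod:
  assumes "inj_on (case_prod g) (C \<times> W)"
  shows "(\<Sum>d\<in>case_prod g ` (C \<times> W). f d) = (\<Sum>z\<in>C. \<Sum>w\<in>W. f (g z w))"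
  unfolding sum.reindex[OF assms] sum.cartesian_product by (simp add: comp_def case_prod_unfold)

lemma case_prod_image_mem_iff:
  "inj (case_prod g) \<Longrightarrow> g z w \<in> case_prod g ` (C \<times> W) \<longleftrightarrow> z \<in> C \<and> w \<in> W"
  using inj_image_mem_iff[of "case_prod g" "(z, w)" "C \<times> W"] by simp

lemma sum_kernel_weighted:
  fixes \<kappa> :: "'c \<Rightarrow> 'w \<Rightarrow> 'a::semiring_1"
  assumes "\<And>z. z \<in> C \<Longrightarrow> f z \<noteq> 0 \<Longrightarrow> (\<Sum>w\<in>W. \<kappa> z w) = 1"
  shows "(\<Sum>z\<in>C. \<Sum>w\<in>W. \<kappa> z w * f z) = (\<Sum>z\<in>C. f z)"
proof (rule sum.cong[OF refl])
  fix z assume "z \<in> C"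
  have "(\<Sum>w\<in>W. \<kappa> z w * f z) = (\<Sum>w\<in>W. \<kappa> z w) * f z"
    by (simp add: sum_distrib_right)
  also have "\<dots> = f z" using assms[OF \<open>z \<in> C\<close>] by (cases "f z = 0") simp_all
  finally show "(\<Sum>w\<in>W. \<kappa> z w * f z) = f z" .
qed

lemma mult_ln_ratio_ge:
  fixes p M T U :: real
  assumes "0 \<le> p" "p \<le> M" "M \<le> T" "p \<le> U" "0 \<le> U"
  shows "p - M * U / T \<le> (if p = 0 then 0 else p * ln (p * T / (M * U)))"
proof (cases "p = 0")
  case True
  with assms show ?thesis by simp
next
  case False
  with assms have pos: "0 < p" "0 < M" "0 < U" "0 < T" by linarith+
  then have "- ln (p * T / (M * U)) \<le> M * U / (p * T) - 1"
    using ln_le_minus_one[of "M * U / (p * T)"] by (simp add: ln_div ln_mult)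
  then have "p * (1 - M * U / (p * T)) \<le> p * ln (p * T / (M * U))"
    using pos by (intro mult_left_mono) auto
  moreover have "p * (1 - M * U / (p * T)) = p - M * U / T"
    using pos by (simp add: field_simps)
  ultimately show ?thesis using False by simp
qed

lemma mult_ln_ratio_split_le:
  fixes p \<kappa> M T U T' U' :: real
  assumes "0 \<le> p" "0 \<le> \<kappa>" "p \<le> M" "M \<le> T" "p \<le> U" "p * \<kappa> \<le> T'" "p * \<kappa> \<le> U'"
  shows "(if p * \<kappa> = 0 then 0 else p * \<kappa> * ln (p * \<kappa> * T' / (M * \<kappa> * U')))
    \<le> \<kappa> * (if p = 0 then 0 else p * ln (p * T / (M * U))) + p * \<kappa> * (U / T * T' / U' - 1)"
proof (cases "p * \<kappa> = 0")
  case True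
  then show ?thesis by auto
next
  case False
  with assms(1,2) have "0 < p" "0 < \<kappa>" by (auto simp: less_le)
  with assms have pos: "0 < p" "0 < \<kappa>" "0 < M" "0 < T" "0 < U" "0 < T'" "0 < U'"
    using mult_pos_pos[of p \<kappa>] by linarith+
  have "ln (p * \<kappa> * T' / (M * \<kappa> * U')) = ln (p * T / (M * U)) + ln (U / T * T' / U')"
    using pos by (simp add: ln_div ln_mult)
  also have "\<dots> \<le> ln (p * T / (M * U)) + (U / T * T' / U' - 1)"
    using pos by (simp add: ln_le_minus_one)
  finally have "p * \<kappa> * ln (p * \<kappa> * T' / (M * \<kappa> * U'))
      \<le> p * \<kappa> * (ln (p * T / (M * U)) + (U / T * T' / U' - 1))"
    using pos by (intro mult_left_mono) auto
  then show ?thesis using pos by (simp add: algebra_simps)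
qed

definition marg_Z :: "'x set \<Rightarrow> 'y set \<Rightarrow> ('x \<times> 'y \<times> 'c \<Rightarrow> real) \<Rightarrow> 'c \<Rightarrow> real" where
  "marg_Z A B Q c = (\<Sum>x\<in>A. \<Sum>y\<in>B. Q (x, y, c))"

definition marg_XZ :: "'y set \<Rightarrow> ('x \<times> 'y \<times> 'c \<Rightarrow> real) \<Rightarrow> 'x \<Rightarrow> 'c \<Rightarrow> real" where
  "marg_XZ B Q x c = (\<Sum>y\<in>B. Q (x, y, c))"

definition marg_YZ :: "'x set \<Rightarrow> ('x \<times> 'y \<times> 'c \<Rightarrow> real) \<Rightarrow> 'y \<Rightarrow> 'c \<Rightarrow> real" where
  "marg_YZ A Q y c = (\<Sum>x\<in>A. Q (x, y, c))"

definition cond_mi_term :: "'x set \<Rightarrow> 'y set \<Rightarrow> ('x \<times> 'y \<times> 'c \<Rightarrow> real) \<Rightarrow> 'x \<Rightarrow> 'y \<Rightarrow> 'c \<Rightarrow> real" where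
  "cond_mi_term A B Q x y c = (if Q (x, y, c) = 0 then 0
     else Q (x, y, c) * ln (Q (x, y, c) * marg_Z A B Q c / (marg_XZ B Q x c * marg_YZ A Q y c)))"

lemma cond_mi_eq_sum_term: "cond_mi A B C Q = (\<Sum>x\<in>A. \<Sum>y\<in>B. \<Sum>c\<in>C. cond_mi_term A B Q x y c)"
  unfolding cond_mi_def cond_mi_term_def marg_Z_def marg_XZ_def marg_YZ_def Let_def ..

lemma marg_nonneg:
  assumes "\<And>t. 0 \<le> Q t"
  shows "0 \<le> marg_Z A B Q c" "0 \<le> marg_XZ B Q x c" "0 \<le> marg_YZ A Q y c"
  unfolding marg_Z_def marg_XZ_def marg_YZ_def by (simp_all add: assms sum_nonneg)

lemma marg_le:
  assumes "finite A" "finite B" "\<And>t. 0 \<le> Q t" "x \<in> A" "y \<in> B"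
  shows "Q (x, y, c) \<le> marg_XZ B Q x c" "marg_XZ B Q x c \<le> marg_Z A B Q c" "Q (x, y, c) \<le> marg_YZ A Q y c"
  unfolding marg_Z_def marg_XZ_def marg_YZ_def using assms by (auto intro!: member_le_sum sum_nonneg)

lemma marg_XZ_nonzero:
  assumes "finite B" "\<And>t. 0 \<le> Q t" "y \<in> B" "Q (x, y, z) \<noteq> 0"
  shows "marg_XZ B Q x z \<noteq> 0"
proof -
  have "Q (x, y, z) \<le> marg_XZ B Q x z"
    unfolding marg_XZ_def using assms by (intro member_le_sum) auto
  with assms(2)[of "(x, y, z)"] assms(4) show ?thesis by auto
qed

lemma sum_marg_XZ: "(\<Sum>x\<in>A. marg_XZ B Q x c) = marg_Z A B Q c"
  unfolding marg_XZ_def marg_Z_def ..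

lemma sum_marg_YZ: "(\<Sum>y\<in>B. marg_YZ A Q y c) = marg_Z A B Q c"
  unfolding marg_YZ_def marg_Z_def by (rule sum.swap)

lemma sum_reweighted_le:
  fixes u :: "'y \<Rightarrow> 'c \<Rightarrow> real"
  assumes Q_nonneg: "\<And>t. 0 \<le> Q t" and u_nonneg: "\<And>y c. 0 \<le> u y c"
    and u_sum: "\<And>c. (\<Sum>y\<in>B. u y c) \<le> 1"
  shows "(\<Sum>x\<in>A. \<Sum>y\<in>B. \<Sum>c\<in>C. Q (x, y, c) * (u y c * marg_Z A B Q c / marg_YZ A Q y c))
    \<le> (\<Sum>x\<in>A. \<Sum>y\<in>B. \<Sum>c\<in>C. Q (x, y, c))"
proof -
  note marg_nonneg[where Q = Q, OF Q_nonneg]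
  have "(\<Sum>x\<in>A. \<Sum>y\<in>B. \<Sum>c\<in>C. Q (x, y, c) * (u y c * marg_Z A B Q c / marg_YZ A Q y c))
      = (\<Sum>c\<in>C. \<Sum>x\<in>A. \<Sum>y\<in>B. Q (x, y, c) * (u y c * marg_Z A B Q c / marg_YZ A Q y c))"
    by (rule sum_rotate3)
  also have "\<dots> = (\<Sum>c\<in>C. \<Sum>y\<in>B. \<Sum>x\<in>A. Q (x, y, c) * (u y c * marg_Z A B Q c / marg_YZ A Q y c))"
    by (rule sum.cong[OF refl sum.swap])
  also have "\<dots> = (\<Sum>c\<in>C. \<Sum>y\<in>B. marg_YZ A Q y c * (u y c * marg_Z A B Q c / marg_YZ A Q y c))"
    by (simp add: marg_YZ_def sum_distrib_right sum_divide_distrib)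
  also have "\<dots> \<le> (\<Sum>c\<in>C. \<Sum>y\<in>B. u y c * marg_Z A B Q c)"
    by (intro sum_mono) (simp add: u_nonneg marg_nonneg[where Q = Q, OF Q_nonneg])
  also have "\<dots> \<le> (\<Sum>c\<in>C. marg_Z A B Q c)"
    by (auto simp: sum_distrib_right[symmetric] marg_nonneg[where Q = Q, OF Q_nonneg]
        intro!: sum_mono mult_left_le_one_le sum_nonneg u_nonneg u_sum)
  also have "\<dots> = (\<Sum>x\<in>A. \<Sum>y\<in>B. \<Sum>c\<in>C. Q (x, y, c))"
    unfolding marg_Z_def by (rule sum_rotate3[symmetric])
  finally show ?thesis .
qed

lemma cond_mi_reindex:
  assumes "inj_on h E" and "\<And>x y e. x \<in> A \<Longrightarrow> y \<in> B \<Longrightarrow> e \<in> E \<Longrightarrow> R (x, y, h e) = Q (x, y, e)"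
  shows "cond_mi A B (h ` E) R = cond_mi A B E Q"
  unfolding cond_mi_def sum.reindex[OF assms(1)] comp_def
  by (intro sum.cong refl) (simp add: assms(2) cong: sum.cong)

lemma cond_mi_nonneg:
  assumes fin: "finite A" "finite B" and Q_nonneg: "\<And>t. 0 \<le> Q t"
  shows "0 \<le> cond_mi A B C Q"
proof -
  have mass: "(\<Sum>x\<in>A. \<Sum>y\<in>B. marg_XZ B Q x c * marg_YZ A Q y c / marg_Z A B Q c) = marg_Z A B Q c"
    for c
    by (simp add: sum_product[symmetric] sum_divide_distrib[symmetric] sum_marg_XZ sum_marg_YZ)
  have "(\<Sum>x\<in>A. \<Sum>y\<in>B. \<Sum>c\<in>C. marg_XZ B Q x c * marg_YZ A Q y c / marg_Z A B Q c)
      = (\<Sum>c\<in>C. marg_Z A B Q c)"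
    by (simp only: sum_rotate3[where f = "\<lambda>x y c. marg_XZ B Q x c * marg_YZ A Q y c / marg_Z A B Q c"] mass)
  also have "\<dots> = (\<Sum>x\<in>A. \<Sum>y\<in>B. \<Sum>c\<in>C. Q (x, y, c))"
    unfolding marg_Z_def by (rule sum_rotate3[symmetric])
  finally have "0 = (\<Sum>x\<in>A. \<Sum>y\<in>B. \<Sum>c\<in>C. Q (x, y, c) - marg_XZ B Q x c * marg_YZ A Q y c / marg_Z A B Q c)"
    by (simp add: sum_subtractf)
  also have "\<dots> \<le> cond_mi A B C Q"
    unfolding cond_mi_eq_sum_term cond_mi_term_def
    using marg_le[where Q = Q, OF fin Q_nonneg] marg_nonneg[where Q = Q, OF Q_nonneg] Q_nonneg
    by (intro sum_mono mult_ln_ratio_ge) auto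
  finally show ?thesis .
qed

lemma marg_channel_extension:
  fixes Q :: "'x \<times> 'y \<times> 'c \<Rightarrow> real" and \<kappa> :: "'x \<Rightarrow> 'c \<Rightarrow> 'w \<Rightarrow> real"
  defines "Q' \<equiv> \<lambda>(x, y, z, w). Q (x, y, z) * \<kappa> x z w"
  shows "Q' (x, y, c) = Q (x, y, fst c) * \<kappa> x (fst c) (snd c)"
    and "marg_XZ B Q' x c = marg_XZ B Q x (fst c) * \<kappa> x (fst c) (snd c)"
  unfolding Q'_def marg_XZ_def by (simp_all add: split_beta sum_distrib_right)

lemma cond_mi_term_channel_extension_le:
  fixes Q :: "'x \<times> 'y \<times> 'c \<Rightarrow> real" and \<kappa> :: "'x \<Rightarrow> 'c \<Rightarrow> 'w \<Rightarrow> real"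
  defines "Q' \<equiv> \<lambda>(x, y, z, w). Q (x, y, z) * \<kappa> x z w"
  assumes fin: "finite A" "finite B" and Q_nonneg: "\<And>t. 0 \<le> Q t" and \<kappa>_nonneg: "\<And>x z w. 0 \<le> \<kappa> x z w"
    and "x \<in> A" "y \<in> B"
  shows "cond_mi_term A B Q' x y c
    \<le> \<kappa> x (fst c) (snd c) * cond_mi_term A B Q x y (fst c)
      + Q' (x, y, c) * (marg_YZ A Q y (fst c) / marg_Z A B Q (fst c) * marg_Z A B Q' c / marg_YZ A Q' y c - 1)"
proof -
  have Q'_nonneg: "0 \<le> Q' t" for t
    unfolding Q'_def by (simp add: split_beta Q_nonneg \<kappa>_nonneg)
  note Q'_eq = marg_channel_extension[where Q = Q and \<kappa> = \<kappa>, folded Q'_def]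
  obtain z w where c: "c = (z, w)" by (cases c)
  have "Q' (x, y, c) \<le> marg_XZ B Q' x c" "marg_XZ B Q' x c \<le> marg_Z A B Q' c"
    "Q' (x, y, c) \<le> marg_YZ A Q' y c"
    using marg_le[where Q = Q', OF fin Q'_nonneg \<open>x \<in> A\<close> \<open>y \<in> B\<close>] by auto
  then have "Q (x, y, z) * \<kappa> x z w \<le> marg_Z A B Q' c" "Q (x, y, z) * \<kappa> x z w \<le> marg_YZ A Q' y c"
    unfolding Q'_eq c by auto
  then show ?thesis
    unfolding cond_mi_term_def Q'_eq c fst_conv snd_conv
    using marg_le[where Q = Q, OF fin Q_nonneg \<open>x \<in> A\<close> \<open>y \<in> B\<close>]
    by (intro mult_ln_ratio_split_le Q_nonneg \<kappa>_nonneg) auto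
qed

lemma cond_mi_channel_extension_le:
  fixes Q :: "'x \<times> 'y \<times> 'c \<Rightarrow> real" and \<kappa> :: "'x \<Rightarrow> 'c \<Rightarrow> 'w \<Rightarrow> real"
  assumes fin: "finite A" "finite B"
    and Q_nonneg: "\<And>t. 0 \<le> Q t" and \<kappa>_nonneg: "\<And>x z w. 0 \<le> \<kappa> x z w"
    and \<kappa>_sum: "\<And>x z. x \<in> A \<Longrightarrow> z \<in> C \<Longrightarrow> marg_XZ B Q x z \<noteq> 0 \<Longrightarrow> (\<Sum>w\<in>W. \<kappa> x z w) = 1"
  shows "cond_mi A B (C \<times> W) (\<lambda>(x, y, z, w). Q (x, y, z) * \<kappa> x z w) \<le> cond_mi A B C Q"
proof -
  define Q' where "Q' = (\<lambda>(x, y, z, w). Q (x, y, z) * \<kappa> x z w)"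
  define u :: "'y \<Rightarrow> 'c \<times> 'w \<Rightarrow> real"
    where "u y c = marg_YZ A Q y (fst c) / marg_Z A B Q (fst c)" for y c
  have Q'_nonneg: "0 \<le> Q' t" for t
    unfolding Q'_def by (simp add: split_beta Q_nonneg \<kappa>_nonneg)
  have mix: "(\<Sum>c\<in>C \<times> W. \<kappa> x (fst c) (snd c) * cond_mi_term A B Q x y (fst c))
      = (\<Sum>z\<in>C. cond_mi_term A B Q x y z)" if "x \<in> A" "y \<in> B" for x y
    unfolding sum.cartesian_product' fst_conv snd_conv
  proof (rule sum_kernel_weighted)
    fix z assume "z \<in> C" "cond_mi_term A B Q x y z \<noteq> 0"
    then have "Q (x, y, z) \<noteq> 0" by (auto simp: cond_mi_term_def)
    with that \<open>z \<in> C\<close> show "(\<Sum>w\<in>W. \<kappa> x z w) = 1"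
      by (intro \<kappa>_sum marg_XZ_nonzero[OF fin(2) Q_nonneg])
  qed
  have u_sum: "(\<Sum>y\<in>B. u y c) \<le> 1" for c
    unfolding u_def by (simp add: sum_divide_distrib[symmetric] sum_marg_YZ divide_le_eq_1)
  have "cond_mi A B (C \<times> W) Q' \<le> (\<Sum>x\<in>A. \<Sum>y\<in>B. \<Sum>c\<in>C \<times> W.
      \<kappa> x (fst c) (snd c) * cond_mi_term A B Q x y (fst c)
      + Q' (x, y, c) * (u y c * marg_Z A B Q' c / marg_YZ A Q' y c - 1))"
    unfolding cond_mi_eq_sum_term u_def Q'_def
    using cond_mi_term_channel_extension_le[OF fin Q_nonneg \<kappa>_nonneg] by (intro sum_mono) simp
  also have "\<dots> = cond_mi A B C Q
      + ((\<Sum>x\<in>A. \<Sum>y\<in>B. \<Sum>c\<in>C \<times> W. Q' (x, y, c) * (u y c * marg_Z A B Q' c / marg_YZ A Q' y c))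
         - (\<Sum>x\<in>A. \<Sum>y\<in>B. \<Sum>c\<in>C \<times> W. Q' (x, y, c)))"
    by (simp add: cond_mi_eq_sum_term mix algebra_simps sum.distrib sum_subtractf)
  also have "\<dots> \<le> cond_mi A B C Q"
    using sum_reweighted_le[where Q = Q' and u = u and A = A and B = B and C = "C \<times> W", OF Q'_nonneg] u_sum
    by (simp add: u_def marg_nonneg Q_nonneg divide_nonneg_nonneg)
  finally show ?thesis unfolding Q'_def .
qed

lemma marginal_distr_on:
  assumes inj: "inj (case_prod g)" and P: "P \<in> distr_on A B (case_prod g ` (C \<times> W))"
  shows "(\<lambda>(x, y, z). \<Sum>w\<in>W. P (x, y, g z w)) \<in> distr_on A B C"
proof -
  have P_out: "P (x, y, g z w) = 0" if "(x, y, z) \<notin> A \<times> B \<times> C" "w \<in> W" for x y z w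
  proof -
    have "g z w \<notin> case_prod g ` (C \<times> W) \<or> (x, y) \<notin> A \<times> B"
      using that case_prod_image_mem_iff[OF inj] by auto
    then show ?thesis using P by (auto simp: distr_on_def)
  qed
  have "(\<Sum>t\<in>A \<times> B \<times> C. (\<lambda>(x, y, z). \<Sum>w\<in>W. P (x, y, g z w)) t)
      = (\<Sum>t\<in>A \<times> B \<times> case_prod g ` (C \<times> W). P t)"
    by (simp add: sum_cartesian_product3 sum_image_case_prod[OF inj_on_subset[OF inj]])
  then show ?thesis
    using P P_out by (auto simp: distr_on_def sum_nonneg)
qed

lemma exists_extension_on_image:
  fixes F :: "'x \<Rightarrow> 'y \<Rightarrow> 'c \<Rightarrow> 'w \<Rightarrow> 'a::zero"
  assumes inj: "inj (case_prod g)"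
  obtains R where "\<And>x y z w. z \<in> C \<Longrightarrow> w \<in> W \<Longrightarrow> R (x, y, g z w) = F x y z w"
    and "\<And>x y d. d \<notin> case_prod g ` (C \<times> W) \<Longrightarrow> R (x, y, d) = 0"
proof
  let ?R = "\<lambda>(x, y, d). if d \<in> case_prod g ` (C \<times> W)
    then (case inv (case_prod g) d of (z, w) \<Rightarrow> F x y z w) else 0"
  show "?R (x, y, g z w) = F x y z w" if "z \<in> C" "w \<in> W" for x y z w
    using that inv_f_f[OF inj, of "(z, w)"] by auto
  show "?R (x, y, d) = 0" if "d \<notin> case_prod g ` (C \<times> W)" for x y d
    using that by simp
qed

lemma channel_extension_in_Delta_P:
  assumes fin: "finite B" and inj: "inj (case_prod g)"
    and P: "P \<in> distr_on A B (case_prod g ` (C \<times> W))"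
    and Q: "Q \<in> Delta_P A B C (\<lambda>(x, y, z). \<Sum>w\<in>W. P (x, y, g z w))"
    and \<kappa>_nonneg: "\<And>x z w. 0 \<le> \<kappa> x z w"
    and \<kappa>_marg: "\<And>x z w. z \<in> C \<Longrightarrow> w \<in> W \<Longrightarrow> marg_XZ B Q x z * \<kappa> x z w = marg_XZ B P x (g z w)"
    and \<kappa>_sum: "\<And>x z. x \<in> A \<Longrightarrow> z \<in> C \<Longrightarrow> marg_XZ B Q x z \<noteq> 0 \<Longrightarrow> (\<Sum>w\<in>W. \<kappa> x z w) = 1"
    and R_app: "\<And>x y z w. z \<in> C \<Longrightarrow> w \<in> W \<Longrightarrow> R (x, y, g z w) = Q (x, y, z) * \<kappa> x z w"
    and R_out: "\<And>x y d. d \<notin> case_prod g ` (C \<times> W) \<Longrightarrow> R (x, y, d) = 0"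
  shows "R \<in> Delta_P A B (case_prod g ` (C \<times> W)) P"
proof -
  define D where "D = case_prod g ` (C \<times> W)"
  have Q_nonneg: "\<And>t. 0 \<le> Q t" and Q_out: "\<And>t. t \<notin> A \<times> B \<times> C \<Longrightarrow> Q t = 0"
    using Q unfolding Delta_P_def distr_on_def by blast+
  have Q_xy: "\<And>x y. (\<Sum>z\<in>C. Q (x, y, z)) = (\<Sum>z\<in>C. \<Sum>w\<in>W. P (x, y, g z w))"
    using Q unfolding Delta_P_def by simp
  have P_out: "\<And>t. t \<notin> A \<times> B \<times> D \<Longrightarrow> P t = 0" and P_total: "(\<Sum>t\<in>A \<times> B \<times> D. P t) = 1"
    using P unfolding distr_on_def D_def by blast+
  have sum_D: "(\<Sum>d\<in>D. f d) = (\<Sum>z\<in>C. \<Sum>w\<in>W. f (g z w))" for f :: "_ \<Rightarrow> real"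
    unfolding D_def by (rule sum_image_case_prod[OF inj_on_subset[OF inj subset_UNIV]])
  have R_on_D: "\<exists>z\<in>C. \<exists>w\<in>W. d = g z w \<and> R (x, y, d) = Q (x, y, z) * \<kappa> x z w" if "d \<in> D" for x y d
    using that R_app by (force simp: D_def)
  have R_nonneg: "0 \<le> R t" for t
    using R_on_D R_out Q_nonneg \<kappa>_nonneg unfolding D_def
    by (cases t rule: prod_cases3) (metis mult_nonneg_nonneg order_refl)
  have R_zero: "R t = 0" if "t \<notin> A \<times> B \<times> D" for t
  proof (cases t rule: prod_cases3)
    case (fields x y d)
    then show ?thesis
      using R_on_D[of d x y] R_out[of d x y] that Q_out by (cases "d \<in> D") (auto simp: D_def)
  qed
  have R_xy: "(\<Sum>d\<in>D. R (x, y, d)) = (\<Sum>d\<in>D. P (x, y, d))" for x y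
  proof -
    have "(\<Sum>z\<in>C. \<Sum>w\<in>W. \<kappa> x z w * Q (x, y, z)) = (\<Sum>z\<in>C. Q (x, y, z))"
    proof (rule sum_kernel_weighted)
      fix z assume "z \<in> C" "Q (x, y, z) \<noteq> 0"
      moreover from this Q_out have "x \<in> A" "y \<in> B" by auto
      ultimately show "(\<Sum>w\<in>W. \<kappa> x z w) = 1"
        by (intro \<kappa>_sum marg_XZ_nonzero[OF fin Q_nonneg])
    qed
    then show ?thesis by (simp add: sum_D R_app Q_xy mult.commute)
  qed
  have R_xz: "(\<Sum>y\<in>B. R (x, y, d)) = (\<Sum>y\<in>B. P (x, y, d))" for x d
  proof (cases "d \<in> D")
    case True
    then obtain z w where "z \<in> C" "w \<in> W" "d = g z w" by (auto simp: D_def)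
    then show ?thesis using \<kappa>_marg by (simp add: R_app marg_XZ_def sum_distrib_right)
  qed (simp add: R_out D_def P_out)
  have "(\<Sum>t\<in>A \<times> B \<times> D. R t) = 1"
    using P_total by (simp add: sum_cartesian_product3 R_xy)
  then show ?thesis
    using R_nonneg R_zero R_xy R_xz by (simp add: Delta_P_def distr_on_def D_def[symmetric])
qed

lemma Delta_P_refinement_le:
  assumes fin: "finite A" "finite B" "finite W" and inj: "inj (case_prod g)"
    and P: "P \<in> distr_on A B (case_prod g ` (C \<times> W))"
    and Q: "Q \<in> Delta_P A B C (\<lambda>(x, y, z). \<Sum>w\<in>W. P (x, y, g z w))"
  shows "\<exists>R \<in> Delta_P A B (case_prod g ` (C \<times> W)) P.
    cond_mi A B (case_prod g ` (C \<times> W)) R \<le> cond_mi A B C Q"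
proof -
  \<comment> \<open>The conditional law \<open>P(w | x, z)\<close>; where the denominator vanishes, so does the
    numerator (see \<open>\<kappa>_marg\<close>), and the junk value \<open>0 / 0 = 0\<close> is harmless.\<close>
  define \<kappa> where "\<kappa> x z w = marg_XZ B P x (g z w) / marg_XZ B Q x z" for x z w
  have Q_nonneg: "0 \<le> Q t" for t
    using Q unfolding Delta_P_def distr_on_def by blast
  have P_nonneg: "0 \<le> P t" for t
    using P unfolding distr_on_def by blast
  have marg_eq: "marg_XZ B Q x z = (\<Sum>w\<in>W. marg_XZ B P x (g z w))" for x z
    using Q unfolding Delta_P_def marg_XZ_def by (simp add: sum.swap[of _ B W])
  have \<kappa>_nonneg: "0 \<le> \<kappa> x z w" for x z w
    unfolding \<kappa>_def by (simp add: marg_nonneg[where Q = Q, OF Q_nonneg] marg_nonneg[where Q = P, OF P_nonneg])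
  have \<kappa>_marg: "marg_XZ B Q x z * \<kappa> x z w = marg_XZ B P x (g z w)" if "w \<in> W" for x z w
  proof (cases "marg_XZ B Q x z = 0")
    case True
    then have "marg_XZ B P x (g z w) = 0"
      using that sum_nonneg_eq_0_iff[OF fin(3), of "\<lambda>w. marg_XZ B P x (g z w)"]
      by (simp add: marg_eq marg_nonneg[where Q = P, OF P_nonneg])
    with True show ?thesis by (simp add: \<kappa>_def)
  qed (simp add: \<kappa>_def)
  have \<kappa>_sum: "(\<Sum>w\<in>W. \<kappa> x z w) = 1" if "marg_XZ B Q x z \<noteq> 0" for x z
    using that unfolding \<kappa>_def by (simp add: sum_divide_distrib[symmetric] marg_eq)
  obtain R where R_app: "\<And>x y z w. z \<in> C \<Longrightarrow> w \<in> W \<Longrightarrow> R (x, y, g z w) = Q (x, y, z) * \<kappa> x z w"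
    and R_out: "\<And>x y d. d \<notin> case_prod g ` (C \<times> W) \<Longrightarrow> R (x, y, d) = 0"
    using exists_extension_on_image[OF inj, where F = "\<lambda>x y z w. Q (x, y, z) * \<kappa> x z w"] by blast
  have R: "R \<in> Delta_P A B (case_prod g ` (C \<times> W)) P"
    using fin(2) inj P Q \<kappa>_nonneg \<kappa>_marg \<kappa>_sum R_app R_out by (rule channel_extension_in_Delta_P)
  have "cond_mi A B (case_prod g ` (C \<times> W)) R
      = cond_mi A B (C \<times> W) (\<lambda>(x, y, z, w). Q (x, y, z) * \<kappa> x z w)"
    using R_app by (intro cond_mi_reindex inj_on_subset[OF inj]) auto
  also have "\<dots> \<le> cond_mi A B C Q"
    using fin(1,2) Q_nonneg \<kappa>_nonneg \<kappa>_sum by (rule cond_mi_channel_extension_le)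
  finally show ?thesis using R by blast
qed

lemma UI_tilde_refinement_le:
  assumes fin: "finite A" "finite B" "finite W" and inj: "inj (case_prod g)"
    and P: "P \<in> distr_on A B (case_prod g ` (C \<times> W))"
  shows "UI_tilde A B (case_prod g ` (C \<times> W)) P \<le> UI_tilde A B C (\<lambda>(x, y, z). \<Sum>w\<in>W. P (x, y, g z w))"
proof -
  let ?D = "case_prod g ` (C \<times> W)" and ?Pm = "\<lambda>(x, y, z). \<Sum>w\<in>W. P (x, y, g z w)"
  have "?Pm \<in> Delta_P A B C ?Pm"
    using marginal_distr_on[OF inj P] by (simp add: Delta_P_def)
  moreover have "bdd_below (cond_mi A B ?D ` Delta_P A B ?D P)"
    using cond_mi_nonneg[OF fin(1,2)] by (auto simp: Delta_P_def distr_on_def intro!: bdd_belowI)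
  ultimately show ?thesis
    unfolding UI_tilde_def using Delta_P_refinement_le[OF fin inj P]
    by (intro cInf_mono) auto
qed

lemma tuples_Suc: "tuples S (Suc k) = (\<lambda>(zs, z). zs @ [z]) ` (tuples S k \<times> S k)"
proof (intro equalityI subsetI)
  fix zs assume zs: "zs \<in> tuples S (Suc k)"
  then have "zs \<noteq> []" by (auto simp: tuples_def)
  moreover from zs this have "butlast zs \<in> tuples S k" "last zs \<in> S k"
    by (auto simp: tuples_def nth_butlast last_conv_nth)
  ultimately show "zs \<in> (\<lambda>(zs, z). zs @ [z]) ` (tuples S k \<times> S k)"
    by (auto intro!: image_eqI[where x = "(butlast zs, last zs)"])
qed (auto simp: tuples_def nth_append less_Suc_eq)

theorem mainTheorem15:
  fixes A :: "'x set" and B :: "'y set" and S :: "nat \<Rightarrow> 'z set" and k :: nat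
    and P :: "'x \<times> 'y \<times> 'z list \<Rightarrow> real"
  assumes "k \<ge> 1"
    and "finite A" and "finite B" and "\<forall>i\<le>k. finite (S i)"
    and "P \<in> distr_on A B (tuples S (Suc k))"
  shows "UI_tilde A B (tuples S k) (\<lambda>(x, y, zs). \<Sum>z\<in>S k. P (x, y, zs @ [z]))
           \<ge> UI_tilde A B (tuples S (Suc k)) P"
proof -
  have "inj (\<lambda>(zs, z). zs @ [z])" by (auto intro!: injI)
  then show ?thesis
    using UI_tilde_refinement_le[of A B "S k" "\<lambda>zs z. zs @ [z]" P "tuples S k"] assms
    by (simp add: tuples_Suc)
qed


end
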